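(* Let $a\in[0,\infty)$ and let $\theta:[0,1]\to[0,\infty]$ and $\vartheta:[0,\infty]\to[0,1]$ be continuous and decreasing functions such that $O_{\theta,\vartheta}(x,y)=\vartheta(\theta(x)+\theta(y))$ defines an overlap function $O_{\theta,\vartheta}:[0,1]^2\to[0,1]$, and suppose that at least one of the following holds: (1) $\theta(x)=\frac{a}{2}$ if and only if $x=1$; (2) $\vartheta(x)=1$ if and only if $x\in[0,a]$. Then there exist a pseudo automorphism $\mathcal{F}$ and a t-subnorm $T_{sub}$ such that $O_{\theta,\vartheta}(x,y)=\mathcal{F}(T_{sub}(x,y))$ for all $x,y\in[0,1]$.
   Context: "Decreasing" means non-increasing and "increasing" means non-decreasing. Arithmetic in $[0,\infty]$ uses $c+\infty=\infty$; continuity on $[0,\infty]$ refers to the usual topology of the extended half-line. An overlap function is a map $O:[0,1]^2\to[0,1]$ that is (O1) commutative, (O2) $O(x,y)=0$ iff $xy=0$, (O3) $O(x,y)=1$ iff $xy=1$, (O4) increasing in each variable, (O5) continuous. A pseudo automorphism is a continuous increasing map $\mathcal{F}:[0,1]\to[0,1]$ with $\mathcal{F}(x)=1$ iff $x=1$ and $\mathcal{F}(x)=0$ iff $x=0$. A t-subnorm is a commutative, associative map $T:[0,1]^2\to[0,1]$, increasing in each variable, with $T(x,y)\le\min\{x,y\}$ for all $x,y$. *)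

theory Defs
  imports "HOL-Analysis.Analysis" "HOL-Library.Extended_Nonnegative_Real"
begin

text \<open>The extended half-line [0,\<infinity>] is modelled by the type ennreal
  (addition with c + \<infinity> = \<infinity>, order topology of the extended half-line).
  Maps on [0,1] are total functions real \<Rightarrow> real whose behaviour
  is only constrained on the unit interval.\<close>

definition overlap :: "(real \<Rightarrow> real \<Rightarrow> real) \<Rightarrow> bool" where
  "overlap Ov \<longleftrightarrow>
     (\<forall>x\<in>{0..1}. \<forall>y\<in>{0..1}. Ov x y \<in> {0..1}) \<and>
     (\<forall>x\<in>{0..1}. \<forall>y\<in>{0..1}. Ov x y = Ov y x) \<and>
     (\<forall>x\<in>{0..1}. \<forall>y\<in>{0..1}. Ov x y = 0 \<longleftrightarrow> x * y = 0) \<and>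
     (\<forall>x\<in>{0..1}. \<forall>y\<in>{0..1}. Ov x y = 1 \<longleftrightarrow> x * y = 1) \<and>
     (\<forall>x\<in>{0..1}. \<forall>x'\<in>{0..1}. \<forall>y\<in>{0..1}. x \<le> x' \<longrightarrow> Ov x y \<le> Ov x' y) \<and>
     (\<forall>x\<in>{0..1}. \<forall>y\<in>{0..1}. \<forall>y'\<in>{0..1}. y \<le> y' \<longrightarrow> Ov x y \<le> Ov x y') \<and>
     continuous_on ({0..1} \<times> {0..1}) (\<lambda>(x, y). Ov x y)"

definition pseudo_automorphism :: "(real \<Rightarrow> real) \<Rightarrow> bool" where
  "pseudo_automorphism F \<longleftrightarrow>
     (\<forall>x\<in>{0..1}. F x \<in> {0..1}) \<and>
     continuous_on {0..1} F \<and>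
     mono_on {0..1} F \<and>
     (\<forall>x\<in>{0..1}. F x = 1 \<longleftrightarrow> x = 1) \<and>
     (\<forall>x\<in>{0..1}. F x = 0 \<longleftrightarrow> x = 0)"

definition t_subnorm :: "(real \<Rightarrow> real \<Rightarrow> real) \<Rightarrow> bool" where
  "t_subnorm T \<longleftrightarrow>
     (\<forall>x\<in>{0..1}. \<forall>y\<in>{0..1}. T x y \<in> {0..1}) \<and>
     (\<forall>x\<in>{0..1}. \<forall>y\<in>{0..1}. T x y = T y x) \<and>
     (\<forall>x\<in>{0..1}. \<forall>y\<in>{0..1}. \<forall>z\<in>{0..1}. T (T x y) z = T x (T y z)) \<and>
     (\<forall>x\<in>{0..1}. \<forall>x'\<in>{0..1}. \<forall>y\<in>{0..1}. x \<le> x' \<longrightarrow> T x y \<le> T x' y) \<and>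
     (\<forall>x\<in>{0..1}. \<forall>y\<in>{0..1}. \<forall>y'\<in>{0..1}. y \<le> y' \<longrightarrow> T x y \<le> T x y') \<and>
     (\<forall>x\<in>{0..1}. \<forall>y\<in>{0..1}. T x y \<le> min x y)"

end

theory Submission
  imports Defs
begin

text \<open>Set \<open>T(x,y) = min {z. \<theta> z + \<theta> 1 \<le> \<theta> x + \<theta> y}\<close> and \<open>F z = \<vartheta>(\<theta> z + \<theta> 1)\<close>, so that
  \<open>F (T x y) = \<vartheta>(\<theta> x + \<theta> y)\<close> as soon as the minimum solves \<open>\<theta> T(x,y) + \<theta> 1 = \<theta> x + \<theta> y\<close>.
  That equation, an intermediate value property, needs \<open>\<theta> 0 = \<infinity>\<close> and \<open>\<theta> 1 < \<infinity>\<close>, and both are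
  forced by the overlap axioms: \<open>O(0,1) = 0 \<noteq> 1 = O(1,1)\<close> rules out \<open>\<theta> 1 = \<infinity>\<close>, and
  \<open>O(x,x) > 0 = O(0,1)\<close> for \<open>x > 0\<close> gives \<open>2\<theta>(0) \<le> \<theta> 0 + \<theta> 1\<close> in the limit.
  Given the equation, \<open>T\<close> inherits commutativity and associativity from addition
  (\<open>\<theta> 1\<close> being finite can be cancelled), monotonicity from \<open>\<theta>\<close>, and \<open>T x y \<le> x\<close> from
  \<open>\<theta> 1 \<le> \<theta> y\<close>.\<close>

lemma closed_sublevel_on:
  fixes f :: "'a::topological_space \<Rightarrow> 'b::linorder_topology"
  assumes "continuous_on S f" "closed S"
  shows "closed {z\<in>S. f z \<le> t}"
proof -
  have "closed (S \<inter> f -` {..t})"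
    using assms by (intro continuous_closed_preimage) auto
  then show ?thesis by (simp add: Int_def)
qed

lemma closed_superlevel_on:
  fixes f :: "'a::topological_space \<Rightarrow> 'b::linorder_topology"
  assumes "continuous_on S f" "closed S"
  shows "closed {z\<in>S. t \<le> f z}"
proof -
  have "closed (S \<inter> f -` {t..})"
    using assms by (intro continuous_closed_preimage) auto
  then show ?thesis by (simp add: Int_def)
qed

definition generated_t_subnorm :: "(real \<Rightarrow> ennreal) \<Rightarrow> real \<Rightarrow> real \<Rightarrow> real" where
  "generated_t_subnorm th x y = Inf {z\<in>{0..1}. th z + th 1 \<le> th x + th y}"

locale t_subnorm_generator =
  fixes th :: "real \<Rightarrow> ennreal"
  assumes continuous: "continuous_on {0..1} th"
    and antimono: "antimono_on {0..1} th"
    and at_zero: "th 0 = \<infinity>"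
    and at_one_finite: "th 1 \<noteq> \<infinity>"
begin

lemma at_one_le: "x \<in> {0..1} \<Longrightarrow> th 1 \<le> th x"
  using antimono by (auto simp: monotone_on_def)

lemma continuous_shifted: "continuous_on {0..1} (\<lambda>z. th z + th 1)"
  by (intro continuous_on_add continuous continuous_on_const)

lemma Inf_sublevel_solves:
  assumes "2 * th 1 \<le> t"
  defines "S \<equiv> {z\<in>{0..1}. th z + th 1 \<le> t}"
  shows "Inf S \<in> {0..1}" "th (Inf S) + th 1 = t"
proof -
  have bdd: "bdd_below S"
    unfolding S_def by (rule bdd_belowI[of _ 0]) auto
  have "1 \<in> S"
    using assms by (auto simp: mult_2)
  moreover have "closed S"
    unfolding S_def by (intro closed_sublevel_on continuous_shifted) auto
  ultimately have Inf_in: "Inf S \<in> S"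
    using closed_contains_Inf bdd by blast
  then show Inf_unit: "Inf S \<in> {0..1}"
    unfolding S_def by auto
  have "t \<le> th (Inf S) + th 1"
  proof (cases "Inf S = 0")
    case True
    then show ?thesis by (simp add: at_zero)
  next
    case False
    then have "Inf S \<in> closure {0..<Inf S}"
      using Inf_unit by simp
    moreover have "{0..<Inf S} \<subseteq> {z\<in>{0..1}. t \<le> th z + th 1}"
      using Inf_unit cInf_lower[OF _ bdd] by (force simp: S_def)
    moreover have "closed {z\<in>{0..1}. t \<le> th z + th 1}"
      by (intro closed_superlevel_on continuous_shifted) auto
    ultimately show ?thesis
      using closure_minimal by blast
  qed
  with Inf_in show "th (Inf S) + th 1 = t"
    unfolding S_def by simp
qed

lemma generated_t_subnorm:
  assumes "x \<in> {0..1}" "y \<in> {0..1}"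
  shows "generated_t_subnorm th x y \<in> {0..1}"
    and "th (generated_t_subnorm th x y) + th 1 = th x + th y"
proof -
  have "2 * th 1 \<le> th x + th y"
    using at_one_le assms by (simp add: mult_2 add_mono)
  from Inf_sublevel_solves[OF this]
  show "generated_t_subnorm th x y \<in> {0..1}"
    and "th (generated_t_subnorm th x y) + th 1 = th x + th y"
    unfolding generated_t_subnorm_def by auto
qed

lemma generated_t_subnorm_commute: "generated_t_subnorm th x y = generated_t_subnorm th y x"
  unfolding generated_t_subnorm_def by (simp add: add.commute)

lemma generated_t_subnorm_le_left:
  assumes "x \<in> {0..1}" "y \<in> {0..1}"
  shows "generated_t_subnorm th x y \<le> x"
  unfolding generated_t_subnorm_def using assms at_one_le[OF assms(2)]
  by (intro cInf_lower) (auto intro: add_left_mono bdd_belowI[of _ 0])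

lemma generated_t_subnorm_mono_left:
  assumes "x \<in> {0..1}" "x' \<in> {0..1}" "y \<in> {0..1}" "x \<le> x'"
  shows "generated_t_subnorm th x y \<le> generated_t_subnorm th x' y"
proof -
  have "th x' \<le> th x"
    using antimono assms by (auto simp: monotone_on_def)
  then have "th x' + th y \<le> th x + th y"
    by (rule add_right_mono)
  then have "{z\<in>{0..1}. th z + th 1 \<le> th x' + th y} \<subseteq> {z\<in>{0..1}. th z + th 1 \<le> th x + th y}"
    using order_trans by blast
  moreover have "generated_t_subnorm th x' y \<in> {z\<in>{0..1}. th z + th 1 \<le> th x' + th y}"
    using generated_t_subnorm[OF assms(2,3)] by simp
  ultimately show ?thesis
    unfolding generated_t_subnorm_def
    by (intro cInf_superset_mono) (auto intro: bdd_belowI[of _ 0])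
qed

lemma generated_t_subnorm_assoc:
  assumes "x \<in> {0..1}" "y \<in> {0..1}" "z \<in> {0..1}"
  shows "generated_t_subnorm th (generated_t_subnorm th x y) z
       = generated_t_subnorm th x (generated_t_subnorm th y z)"
proof -
  have "th (generated_t_subnorm th x y) + th z + th 1 = th x + th y + th z"
    using generated_t_subnorm(2)[OF assms(1,2)] by (metis add.commute add.left_commute)
  also have "\<dots> = th x + th (generated_t_subnorm th y z) + th 1"
    using generated_t_subnorm(2)[OF assms(2,3)] by (metis add.assoc)
  finally have "th (generated_t_subnorm th x y) + th z = th x + th (generated_t_subnorm th y z)"
    using at_one_finite by (metis ennreal_add_left_cancel add.commute)
  then show ?thesis
    unfolding generated_t_subnorm_def by simp
qed

lemma t_subnorm_generated_t_subnorm: "t_subnorm (generated_t_subnorm th)"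
  unfolding t_subnorm_def
proof (intro conjI ballI impI)
  fix x y :: real
  assume xy: "x \<in> {0..1}" "y \<in> {0..1}"
  then show "generated_t_subnorm th x y \<in> {0..1}"
    by (rule generated_t_subnorm(1))
  show "generated_t_subnorm th x y = generated_t_subnorm th y x"
    by (rule generated_t_subnorm_commute)
  show "generated_t_subnorm th x y \<le> min x y"
    using generated_t_subnorm_le_left[OF xy] generated_t_subnorm_le_left[OF xy(2,1)]
      generated_t_subnorm_commute[of x y] by simp
next
  fix x y z :: real
  assume "x \<in> {0..1}" "y \<in> {0..1}" "z \<in> {0..1}"
  then show "generated_t_subnorm th (generated_t_subnorm th x y) z
           = generated_t_subnorm th x (generated_t_subnorm th y z)"
    by (rule generated_t_subnorm_assoc)
next
  fix x x' y :: real
  assume "x \<in> {0..1}" "x' \<in> {0..1}" "y \<in> {0..1}" "x \<le> x'"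
  then show "generated_t_subnorm th x y \<le> generated_t_subnorm th x' y"
    by (rule generated_t_subnorm_mono_left)
next
  fix x y y' :: real
  assume "x \<in> {0..1}" "y \<in> {0..1}" "y' \<in> {0..1}" "y \<le> y'"
  then show "generated_t_subnorm th x y \<le> generated_t_subnorm th x y'"
    using generated_t_subnorm_mono_left generated_t_subnorm_commute by metis
qed

end

lemma overlap_theta_one_finite:
  fixes th :: "real \<Rightarrow> ennreal" and vth :: "ennreal \<Rightarrow> real"
  assumes "antimono_on {0..1} th" "overlap (\<lambda>x y. vth (th x + th y))"
  shows "th 1 \<noteq> \<infinity>"
proof
  assume "th 1 = \<infinity>"
  moreover have "th 1 \<le> th 0"
    using assms(1) by (auto simp: monotone_on_def)
  ultimately have "th 0 = th 1"
    by (simp add: top_unique)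
  moreover have "vth (th 0 + th 1) = 0" "vth (th 1 + th 1) = 1"
    using assms(2) by (auto simp: overlap_def)
  ultimately show False by simp
qed

lemma overlap_theta_zero_infinite:
  fixes th :: "real \<Rightarrow> ennreal" and vth :: "ennreal \<Rightarrow> real"
  assumes theta_cont: "continuous_on {0..1} th"
    and theta_dec: "antimono_on {0..1} th"
    and vtheta_range: "\<forall>t. vth t \<in> {0..1}"
    and vtheta_dec: "antimono vth"
    and ovl: "overlap (\<lambda>x y. vth (th x + th y))"
  shows "th 0 = \<infinity>"
proof (rule ccontr)
  assume th0_finite: "th 0 \<noteq> \<infinity>"
  have O01: "vth (th 0 + th 1) = 0" and O11: "vth (th 1 + th 1) = 1"
    using ovl by (auto simp: overlap_def)
  have "{0<..1} \<subseteq> {z\<in>{0..1}. th z + th z \<le> th 0 + th 1}"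
  proof (intro subsetI CollectI conjI)
    fix x :: real
    assume x: "x \<in> {0<..1}"
    then show "x \<in> {0..1}" by simp
    have "vth (th x + th x) \<noteq> 0"
      using ovl x by (auto simp: overlap_def)
    then have less: "vth (th 0 + th 1) < vth (th x + th x)"
      using O01 vtheta_range by (metis atLeastAtMost_iff order_le_less)
    show "th x + th x \<le> th 0 + th 1"
    proof (rule ccontr)
      assume "\<not> th x + th x \<le> th 0 + th 1"
      then have "vth (th x + th x) \<le> vth (th 0 + th 1)"
        using vtheta_dec by (simp add: antimonoD)
      with less show False by simp
    qed
  qed
  moreover have "closed {z\<in>{0..1}. th z + th z \<le> th 0 + th 1}"
    by (intro closed_sublevel_on continuous_on_add theta_cont) auto
  ultimately have "closure {0<..1} \<subseteq> {z\<in>{0..1}. th z + th z \<le> th 0 + th 1}"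
    by (rule closure_minimal)
  moreover have "(0::real) \<in> closure {0<..1}"
    by simp
  ultimately have "th 0 + th 0 \<le> th 0 + th 1"
    by blast
  then have "th 0 \<le> th 1"
    using th0_finite by (simp add: ennreal_add_left_cancel_le)
  moreover have "th 1 \<le> th 0"
    using theta_dec by (auto simp: monotone_on_def)
  ultimately have "th 0 = th 1"
    by (rule order.antisym)
  then show False
    using O01 O11 by simp
qed

lemma overlap_pseudo_automorphism:
  fixes th :: "real \<Rightarrow> ennreal" and vth :: "ennreal \<Rightarrow> real"
  assumes theta_cont: "continuous_on {0..1} th"
    and vtheta_range: "\<forall>t. vth t \<in> {0..1}"
    and vtheta_cont: "continuous_on UNIV vth"
    and ovl: "overlap (\<lambda>x y. vth (th x + th y))"
  shows "pseudo_automorphism (\<lambda>z. vth (th z + th 1))"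
  unfolding pseudo_automorphism_def
proof (intro conjI ballI)
  show "continuous_on {0..1} (\<lambda>z. vth (th z + th 1))"
    by (intro continuous_on_compose2[OF vtheta_cont] continuous_on_add theta_cont
        continuous_on_const) auto
  show "mono_on {0..1} (\<lambda>z. vth (th z + th 1))"
    using ovl by (auto simp: overlap_def monotone_on_def)
qed (use ovl vtheta_range in \<open>auto simp: overlap_def\<close>)

theorem proposition5p1:
  fixes a :: real and th :: "real \<Rightarrow> ennreal" and vth :: "ennreal \<Rightarrow> real"
  assumes a_nonneg: "0 \<le> a"
    and theta_cont: "continuous_on {0..1} th"
    and theta_dec: "antimono_on {0..1} th"
    and vtheta_range: "\<forall>t. vth t \<in> {0..1}"
    and vtheta_cont: "continuous_on UNIV vth"
    and vtheta_dec: "antimono vth"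
    and ovl: "overlap (\<lambda>x y. vth (th x + th y))"
    and cond: "(\<forall>x\<in>{0..1}. th x = ennreal (a / 2) \<longleftrightarrow> x = 1)
             \<or> (\<forall>t. vth t = 1 \<longleftrightarrow> t \<in> {0..ennreal a})"
  shows "\<exists>F T. pseudo_automorphism F \<and> t_subnorm T \<and>
           (\<forall>x\<in>{0..1}. \<forall>y\<in>{0..1}. vth (th x + th y) = F (T x y))"
proof -
  interpret t_subnorm_generator th
  proof
    show "th 0 = \<infinity>"
      using overlap_theta_zero_infinite theta_cont theta_dec vtheta_range vtheta_dec ovl .
    show "th 1 \<noteq> \<infinity>"
      using overlap_theta_one_finite theta_dec ovl .
  qed (fact theta_cont theta_dec)+
  have "\<forall>x\<in>{0..1}. \<forall>y\<in>{0..1}.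
          vth (th x + th y) = vth (th (generated_t_subnorm th x y) + th 1)"
    using generated_t_subnorm(2) by simp
  with overlap_pseudo_automorphism[OF theta_cont vtheta_range vtheta_cont ovl]
    t_subnorm_generated_t_subnorm
  show ?thesis
    by (intro exI[of _ "\<lambda>z. vth (th z + th 1)"] exI[of _ "generated_t_subnorm th"]) simp
qed

end
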